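(* Let $y_1=x_2x_1x_2^{-1}$. For every integer $n\ge1$, $x_1^n$ has one of the forms $M_0([23,224,138],[59,136,495],\dots)$, $M_0([23,224,138],[28,88,341],\dots)$, $M_{2^r-1}([39,208,186],[0,0,0],\dots)$ for some odd $r\ge1$, or $M_{2^r-1}([23,224,138],[0,0,0],\dots)$ for some even $r\ge2$; and for every $n\ge1$, $y_1^n$ has one of the forms $M_0([23,224,138],[33,146,501],\dots)$, $M_0([23,224,138],[6,66,335],\dots)$, $M_{2^r-1}([39,208,186],[0,106,247],\dots)$ for some odd $r\ge1$, or $M_{2^r-1}([23,224,138],[26,26,26],\dots)$ for some even $r\ge2$.
   Context: Consider infinite upper unitriangular block matrices $X=(X_{r,s})_{r,s\ge1}$ whose entries are $3\times3$ matrices over $\mathbb F_2$, with $X_{r,r}=I$, $X_{r,s}=0$ for $s<r$, and whose upper diagonals are $3$-periodic: for each $j\ge1$ there are $a_{j1},a_{j2},a_{j3}\in M(3,\mathbb F_2)$ with $X_{r,r+j}=a_{j,i}$, where $i\in\{1,2,3\}$, $i\equiv r\pmod 3$; $a_j=[a_{j1},a_{j2},a_{j3}]$ is the $j$-th upper diagonal. For $l\ge0$, $M_l(c_1,c_2,\dots)$ denotes such a matrix whose first $l$ upper diagonals are zero and whose $(l+1)$-st, $(l+2)$-nd, $\dots$ upper diagonals are $c_1,c_2,\dots$; diagonals hidden in "$\dots$" are unspecified, while a matrix written $M_0(c_1,\dots,c_m)$ without dots has all further diagonals zero. A matrix $u=(u_{pq})\in M(3,\mathbb F_2)$ is encoded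 by the integer $256u_{11}+128u_{12}+64u_{13}+32u_{21}+16u_{22}+8u_{23}+4u_{31}+2u_{32}+u_{33}$, and a diagonal by the triple of integers of its three blocks. The elements are $x_1=M_0([23,224,138],[59,136,495],[26,488,227],[23,224,0],[59,0,0])$, $x_2=M_0([46,68,217],[12,194,363],[26,326,77],[46,68,0],[12,0,0])$. *)

theory Defs
  imports "HOL-Analysis.Analysis" "HOL-Library.Z2"
begin

text \<open>3x3 matrices over F_2 (rows/columns indexed 1,2,3 of the numeral type 3).\<close>
type_synonym m3 = "bit ^ 3 ^ 3"

text \<open>Infinite block matrices, block indices r, s >= 1 (index 0 is unused and kept zero).\<close>
type_synonym bm = "nat \<Rightarrow> nat \<Rightarrow> m3"

text \<open>Decoding an integer code 256u11+128u12+...+u33 into a 3x3 matrix.\<close>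
definition bitc :: "nat \<Rightarrow> nat \<Rightarrow> bit" where
  "bitc c k = (if odd (c div 2 ^ k) then 1 else 0)"

definition dec :: "nat \<Rightarrow> m3" where
  "dec c = vector [vector [bitc c 8, bitc c 7, bitc c 6],
                   vector [bitc c 5, bitc c 4, bitc c 3],
                   vector [bitc c 2, bitc c 1, bitc c 0]]"

text \<open>A diagonal: triple of codes of its three blocks a_{j1}, a_{j2}, a_{j3}.\<close>
type_synonym diag = "nat \<times> nat \<times> nat"

definition dblock :: "diag \<Rightarrow> nat \<Rightarrow> m3" where
  "dblock d i = (case d of (a, b, c) \<Rightarrow> if i = 1 then dec a else if i = 2 then dec b else dec c)"

definition pidx :: "nat \<Rightarrow> nat" where
  "pidx r = (r - 1) mod 3 + 1"

definition UT :: "bm set" where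
  "UT = {X. \<forall>r s. ((r = 0 \<or> s = 0 \<or> s < r) \<longrightarrow> X r s = 0) \<and> (1 \<le> r \<longrightarrow> X r r = mat 1)}"

definition G :: "bm set" where
  "G = {X \<in> UT. \<forall>r s. 1 \<le> r \<longrightarrow> r \<le> s \<longrightarrow> X (r + 3) (s + 3) = X r s}"

definition bone :: bm where
  "bone r s = (if 1 \<le> r \<and> r = s then mat 1 else 0)"

definition bmul :: "bm \<Rightarrow> bm \<Rightarrow> bm" where
  "bmul X Y r s = (\<Sum>t\<in>{r..s}. X r t ** Y t s)"

primrec bpow :: "bm \<Rightarrow> nat \<Rightarrow> bm" where
  "bpow X 0 = bone"
| "bpow X (Suc n) = bmul X (bpow X n)"

definition binv :: "bm \<Rightarrow> bm" where
  "binv X = (THE Y. Y \<in> UT \<and> bmul X Y = bone)"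

text \<open>M_0(c_1,...,c_m) with all further diagonals zero.\<close>
definition Mfin :: "diag list \<Rightarrow> bm" where
  "Mfin cs r s = (if r = 0 \<or> s = 0 \<or> s < r then 0
                  else if r = s then mat 1
                  else if s - r \<le> length cs then dblock (cs ! (s - r - 1)) (pidx r)
                  else 0)"

definition has_diag :: "bm \<Rightarrow> nat \<Rightarrow> diag \<Rightarrow> bool" where
  "has_diag X j d = (\<forall>r\<ge>1. X r (r + j) = dblock d (pidx r))"

text \<open>X is of the form M_l(c_1,...,c_m,...): an element of the group whose first l upper
  diagonals vanish and whose (l+1)-st,...,(l+m)-th upper diagonals are c_1,...,c_m
  (further diagonals unspecified).\<close>
definition isM :: "bm \<Rightarrow> nat \<Rightarrow> diag list \<Rightarrow> bool" where
  "isM X l cs = (X \<in> G \<and> (\<forall>j\<in>{1..l}. \<forall>r\<ge>1. X r (r + j) = 0)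
                 \<and> (\<forall>i<length cs. has_diag X (l + 1 + i) (cs ! i)))"

definition x1 :: bm where
  "x1 = Mfin [(23,224,138),(59,136,495),(26,488,227),(23,224,0),(59,0,0)]"

definition x2 :: bm where
  "x2 = Mfin [(46,68,217),(12,194,363),(26,326,77),(46,68,0),(12,0,0)]"

definition y1 :: bm where
  "y1 = bmul (bmul x2 x1) (binv x2)"

end

(*
  Write n = 2^k m with m odd. Squaring a matrix of the form M_l(c, 0, ...) gives
  M_(2l+1)(c', 0, ...) with c'_r = c_r c_(r+l+1), and an odd power of a matrix whose first l >= 1
  diagonals vanish agrees with it on the next l + 1 diagonals. Hence x1^(2^k) = M_(2^k-1)(c_k, 0, ...)
  with c_k alternating between two diagonals, and x1^n has the same two leading diagonals. For odd n,
  x1^n = x1 (x1^2)^((n-1)/2), whose second diagonal depends only on the parity of (n-1)/2.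
  Since y1^n x2 = x2 x1^n, comparing the first nonvanishing diagonals of both sides shows that y1^n
  has the same vanishing and leading diagonals as x1^n, while its next diagonal changes by
  u_r c_(r+1) + c_r u_(r+l+1), u being the first diagonal of x2. The remaining identities between
  diagonals are finite computations in M(3, F_2), block indices being read modulo 3.
*)

theory Submission
  imports Defs
begin

section \<open>Block matrix arithmetic\<close>

lemma m3_add_self [simp]: "(A::m3) + A = 0"
  by (simp add: vec_eq_iff)

lemma m3_double [simp]: "2 * (A::m3) = 0"
  by (simp add: mult_2)

lemma m3_add_eq_iff: "(A::m3) + C = B \<longleftrightarrow> A = B + C"
proof -
  have "- C = C"
    by (rule minus_unique) simp
  then show ?thesis
    by (metis eq_diff_eq diff_conv_add_uminus)
qed

lemma matrix_mul_sum_right: "(A::'a::semiring_1^'n^'m) ** sum f S = (\<Sum>i\<in>S. A ** f i)"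
  by (induct S rule: infinite_finite_induct) (simp_all add: matrix_add_ldistrib)

lemma matrix_add_rdistrib: "((A::'a::semiring_1^'n^'m) + B) ** C = A ** C + B ** C"
  by (simp add: vec_eq_iff matrix_matrix_mult_def sum.distrib distrib_right)

lemma matrix_mul_sum_left: "sum f S ** (A::'a::semiring_1^'n^'m) = (\<Sum>i\<in>S. f i ** A)"
  by (induct S rule: infinite_finite_induct) (simp_all add: matrix_add_rdistrib)

lemma bmul_assoc: "bmul (bmul X Y) Z = bmul X (bmul Y Z)"
proof (intro ext)
  fix r s
  have "bmul (bmul X Y) Z r s = (\<Sum>t\<in>{r..s}. \<Sum>u\<in>{r..t}. X r u ** Y u t ** Z t s)"
    by (simp add: bmul_def matrix_mul_sum_left)
  also have "\<dots> = (\<Sum>(t, u)\<in>{(t, u). r \<le> u \<and> u \<le> t \<and> t \<le> s}. X r u ** Y u t ** Z t s)"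
    by (subst sum.Sigma) (auto intro!: sum.cong)
  also have "\<dots> = (\<Sum>(u, t)\<in>{(u, t). r \<le> u \<and> u \<le> t \<and> t \<le> s}. X r u ** Y u t ** Z t s)"
    by (rule sum.reindex_bij_witness[of _ prod.swap prod.swap]) auto
  also have "\<dots> = (\<Sum>u\<in>{r..s}. \<Sum>t\<in>{u..s}. X r u ** (Y u t ** Z t s))"
    by (subst sum.Sigma) (auto intro!: sum.cong simp: matrix_mul_assoc)
  also have "\<dots> = bmul X (bmul Y Z) r s"
    by (simp add: bmul_def matrix_mul_sum_right)
  finally show "bmul (bmul X Y) Z r s = bmul X (bmul Y Z) r s" .
qed

lemma UT_zero: "X \<in> UT \<Longrightarrow> r = 0 \<or> s = 0 \<or> s < r \<Longrightarrow> X r s = 0"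
  unfolding UT_def by blast

lemma UT_diag: "X \<in> UT \<Longrightarrow> 1 \<le> r \<Longrightarrow> X r r = mat 1"
  unfolding UT_def by blast

lemma G_UT: "X \<in> G \<Longrightarrow> X \<in> UT"
  by (simp add: G_def)

lemma bone_UT: "bone \<in> UT"
  by (auto simp: UT_def bone_def)

lemma bone_G: "bone \<in> G"
  by (auto simp: G_def bone_UT bone_def)

lemma bmul_bone_left: "X \<in> UT \<Longrightarrow> bmul bone X = X"
proof (intro ext)
  fix r s assume X: "X \<in> UT"
  have "bmul bone X r s = (\<Sum>t\<in>{r..s}. if t = r then bone r r ** X r s else 0)"
    unfolding bmul_def by (rule sum.cong) (auto simp: bone_def)
  then show "bmul bone X r s = X r s"
    using X by (cases "r = 0") (auto simp: bone_def UT_zero)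
qed

lemma bmul_bone_right: "X \<in> UT \<Longrightarrow> bmul X bone = X"
proof (intro ext)
  fix r s assume X: "X \<in> UT"
  have "bmul X bone r s = (\<Sum>t\<in>{r..s}. if t = s then X r s ** bone s s else 0)"
    unfolding bmul_def by (rule sum.cong) (auto simp: bone_def)
  then show "bmul X bone r s = X r s"
    using X by (cases "s = 0") (auto simp: bone_def UT_zero)
qed

lemma bmul_UT: "X \<in> UT \<Longrightarrow> Y \<in> UT \<Longrightarrow> bmul X Y \<in> UT"
  unfolding UT_def bmul_def by auto

lemma bmul_shift3:
  assumes "X \<in> G" "Y \<in> G" "1 \<le> r"
  shows "bmul X Y (r + 3) (s + 3) = bmul X Y r s"
proof -
  have "bmul X Y (r + 3) (s + 3) = (\<Sum>t\<in>{r..s}. X (r + 3) (t + 3) ** Y (t + 3) (s + 3))"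
    using sum.shift_bounds_cl_nat_ivl[of "\<lambda>t. X (r + 3) t ** Y t (s + 3)" r 3 s]
    by (simp add: bmul_def)
  also have "\<dots> = bmul X Y r s"
    unfolding bmul_def by (rule sum.cong) (use assms in \<open>auto simp: G_def\<close>)
  finally show ?thesis .
qed

lemma bmul_G: "X \<in> G \<Longrightarrow> Y \<in> G \<Longrightarrow> bmul X Y \<in> G"
  by (simp add: G_def bmul_UT bmul_shift3)

lemma bpow_UT: "X \<in> UT \<Longrightarrow> bpow X n \<in> UT"
  by (induct n) (simp_all add: bone_UT bmul_UT)

lemma bpow_G: "X \<in> G \<Longrightarrow> bpow X n \<in> G"
  by (induct n) (simp_all add: bone_G bmul_G)

lemma bpow_add: "X \<in> UT \<Longrightarrow> bpow X (m + n) = bmul (bpow X m) (bpow X n)"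
  by (induct m) (simp_all add: bmul_bone_left bpow_UT bmul_assoc)

lemma bpow_mult: "X \<in> UT \<Longrightarrow> bpow X (m * n) = bpow (bpow X m) n"
  by (induct n) (simp_all add: bpow_add)

lemma bpow_two: "X \<in> UT \<Longrightarrow> bpow X 2 = bmul X X"
  by (simp add: numeral_2_eq_2 bmul_bone_right)

lemma bpow_intertwine:
  assumes "U \<in> UT" "bmul Y U = bmul U X"
  shows "bmul (bpow Y n) U = bmul U (bpow X n)"
proof (induction n)
  case 0
  then show ?case
    using assms(1) by (simp add: bmul_bone_left bmul_bone_right)
next
  case (Suc n)
  have "bmul (bpow Y (Suc n)) U = bmul Y (bmul U (bpow X n))"
    by (simp add: bmul_assoc Suc.IH)
  also have "\<dots> = bmul U (bpow X (Suc n))"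
    by (simp add: bmul_assoc[symmetric] assms(2))
  finally show ?case .
qed

lemma bpow_odd:
  assumes "X \<in> UT" "odd m"
  shows "bpow X m = bmul X (bpow (bmul X X) (m div 2))"
proof -
  have "m = Suc (2 * (m div 2))"
    using \<open>odd m\<close> by presburger
  then have "bpow X m = bmul X (bpow (bpow X 2) (m div 2))"
    by (metis bpow.simps(2) bpow_mult[OF assms(1)])
  then show ?thesis
    using assms(1) by (simp add: bpow_two)
qed

section \<open>Inverses\<close>

text \<open>Since X r r = 1, the (r, s) entry of X Y is Y r s plus the sum over r < t \<le> s, so a right
  inverse can be solved for one entry at a time, by recursion on s - r.\<close>

function ut_inverse :: "bm \<Rightarrow> bm" where
  "ut_inverse X r s = (if r = 0 \<or> s \<le> r then bone r s
     else - (\<Sum>t\<in>{Suc r..s}. X r t ** ut_inverse X t s))"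
  by auto
termination
  by (relation "Wellfounded.measure (\<lambda>(X, r, s). s - r)") (simp_all, linarith)

declare ut_inverse.simps [simp del]

lemma ut_inverse_UT: "ut_inverse X \<in> UT"
  by (auto simp: UT_def bone_def ut_inverse.simps)

lemma bmul_ut_inverse:
  assumes "X \<in> UT"
  shows "bmul X (ut_inverse X) = bone"
proof (intro ext)
  fix r s
  show "bmul X (ut_inverse X) r s = bone r s"
  proof (cases "r = 0 \<or> s \<le> r")
    case True
    then show ?thesis
      using assms by (auto simp: bmul_def bone_def UT_zero UT_diag ut_inverse.simps)
  next
    case False
    then have "bmul X (ut_inverse X) r s
        = ut_inverse X r s + (\<Sum>t\<in>{Suc r..s}. X r t ** ut_inverse X t s)"
      using assms by (simp add: bmul_def sum.atLeast_Suc_atMost UT_diag)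
    also have "\<dots> = 0"
      using False by (subst ut_inverse.simps) simp
    finally show ?thesis
      using False by (simp add: bone_def)
  qed
qed

lemma ut_inverse_shift3:
  "X \<in> G \<Longrightarrow> 1 \<le> r \<Longrightarrow> ut_inverse X (r + 3) (s + 3) = ut_inverse X r s"
proof (induction X r s rule: ut_inverse.induct)
  case (1 X r s)
  show ?case
  proof (cases "r = 0 \<or> s \<le> r")
    case True
    with "1.prems" show ?thesis
      by (subst (1 2) ut_inverse.simps) (simp add: bone_def)
  next
    case False
    have "(\<Sum>t\<in>{Suc (r + 3)..s + 3}. X (r + 3) t ** ut_inverse X t (s + 3))
        = (\<Sum>t\<in>{Suc r..s}. X (r + 3) (t + 3) ** ut_inverse X (t + 3) (s + 3))"
      using sum.shift_bounds_cl_nat_ivl[of "\<lambda>t. X (r + 3) t ** ut_inverse X t (s + 3)" "Suc r" 3 s]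
      by simp
    also have "\<dots> = (\<Sum>t\<in>{Suc r..s}. X r t ** ut_inverse X t s)"
      using "1" False by (intro sum.cong) (auto simp: G_def)
    finally show ?thesis
      using False by (subst (1 2) ut_inverse.simps) simp
  qed
qed

lemma UT_inverse_commute:
  assumes "X \<in> UT" "Y \<in> UT" "bmul X Y = bone"
  shows "bmul Y X = bone"
proof -
  have "X = bmul (bmul X Y) (ut_inverse Y)"
    by (simp add: bmul_assoc bmul_ut_inverse assms(1,2) bmul_bone_right)
  also have "\<dots> = ut_inverse Y"
    by (simp add: assms(3) bmul_bone_left ut_inverse_UT)
  finally show ?thesis
    using bmul_ut_inverse[OF assms(2)] by simp
qed

lemma binv_eq_ut_inverse:
  assumes "X \<in> UT"
  shows "binv X = ut_inverse X"
  unfolding binv_def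
proof (rule the_equality)
  show "ut_inverse X \<in> UT \<and> bmul X (ut_inverse X) = bone"
    by (simp add: ut_inverse_UT bmul_ut_inverse assms)
next
  fix Y assume Y: "Y \<in> UT \<and> bmul X Y = bone"
  have "Y = bmul (bmul (ut_inverse X) X) Y"
    using UT_inverse_commute[OF assms ut_inverse_UT bmul_ut_inverse[OF assms]] Y
    by (simp add: bmul_bone_left)
  also have "\<dots> = ut_inverse X"
    using Y by (simp add: bmul_assoc bmul_bone_right ut_inverse_UT)
  finally show "Y = ut_inverse X" .
qed

lemma bmul_binv_left: "X \<in> UT \<Longrightarrow> bmul (binv X) X = bone"
  by (simp add: binv_eq_ut_inverse UT_inverse_commute ut_inverse_UT bmul_ut_inverse)

lemma binv_G: "X \<in> G \<Longrightarrow> binv X \<in> G"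
  by (simp add: G_def binv_eq_ut_inverse ut_inverse_UT ut_inverse_shift3)

section \<open>Leading diagonals of products\<close>

definition diags_vanish :: "bm \<Rightarrow> nat \<Rightarrow> bool" where
  "diags_vanish X l \<longleftrightarrow> (\<forall>j\<in>{1..l}. \<forall>r\<ge>1. X r (r + j) = 0)"

lemma diags_vanishD: "diags_vanish X l \<Longrightarrow> 1 \<le> j \<Longrightarrow> j \<le> l \<Longrightarrow> 1 \<le> r \<Longrightarrow> X r (r + j) = 0"
  by (simp add: diags_vanish_def)

lemma diags_vanish_0 [simp]: "diags_vanish X 0"
  by (simp add: diags_vanish_def)

lemma diags_vanish_Suc:
  "diags_vanish X (Suc l) \<longleftrightarrow> diags_vanish X l \<and> (\<forall>r\<ge>1. X r (r + Suc l) = 0)"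
  unfolding diags_vanish_def by (metis atLeastAtMost_iff le_Suc_eq le_add1 plus_1_eq_Suc)

lemma bmul_diag: "bmul X Y r (r + j) = (\<Sum>i\<le>j. X r (r + i) ** Y (r + i) (r + j))"
  using sum.shift_bounds_cl_nat_ivl[of "\<lambda>t. X r t ** Y t (r + j)" 0 r j]
  by (simp add: bmul_def atLeast0AtMost add.commute)

lemma bmul_diag_vanishing:
  assumes X: "X \<in> UT" "diags_vanish X a" and Y: "Y \<in> UT" "diags_vanish Y b"
    and "1 \<le> r" "1 \<le> j"
  shows "bmul X Y r (r + j)
    = X r (r + j) + Y r (r + j) + (\<Sum>i\<in>{a<..<j - b}. X r (r + i) ** Y (r + i) (r + j))"
proof -
  have split: "{..j} = insert j (insert 0 {0<..<j})"
    using \<open>1 \<le> j\<close> by auto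
  have "(\<Sum>i\<in>{0<..<j}. X r (r + i) ** Y (r + i) (r + j))
      = (\<Sum>i\<in>{a<..<j - b}. X r (r + i) ** Y (r + i) (r + j))"
  proof (rule sum.mono_neutral_right)
    show "\<forall>i\<in>{0<..<j} - {a<..<j - b}. X r (r + i) ** Y (r + i) (r + j) = 0"
    proof
      fix i assume i: "i \<in> {0<..<j} - {a<..<j - b}"
      show "X r (r + i) ** Y (r + i) (r + j) = 0"
      proof (cases "i \<le> a")
        case True
        then show ?thesis
          using i diags_vanishD[OF X(2), of i r] \<open>1 \<le> r\<close> by simp
      next
        case False
        then have "Y (r + i) (r + i + (j - i)) = 0"
          using i \<open>1 \<le> r\<close> by (intro diags_vanishD[OF Y(2)]) auto
        moreover have "r + i + (j - i) = r + j"
          using i by simp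
        ultimately show ?thesis
          by simp
      qed
    qed
  qed auto
  then show ?thesis
    using X(1) Y(1) \<open>1 \<le> r\<close> \<open>1 \<le> j\<close>
    by (simp add: bmul_diag split UT_diag add.assoc)
qed

lemma bmul_diag_low:
  assumes "X \<in> UT" "diags_vanish X a" "Y \<in> UT" "diags_vanish Y b"
    and "1 \<le> r" "1 \<le> j" "j \<le> a + b + 1"
  shows "bmul X Y r (r + j) = X r (r + j) + Y r (r + j)"
proof -
  have "{a<..<j - b} = {}"
    using assms(7) by auto
  then show ?thesis
    using bmul_diag_vanishing[OF assms(1-6)] by simp
qed

lemma bmul_diag_next:
  assumes "X \<in> UT" "diags_vanish X a" "Y \<in> UT" "diags_vanish Y b" "1 \<le> r"
  shows "bmul X Y r (r + (a + b + 2))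
    = X r (r + (a + b + 2)) + Y r (r + (a + b + 2))
      + X r (r + (a + 1)) ** Y (r + (a + 1)) (r + (a + b + 2))"
proof -
  have "{a<..<a + b + 2 - b} = {a + 1}"
    by auto
  then show ?thesis
    using bmul_diag_vanishing[OF assms, of "a + b + 2"] by simp
qed

lemma bmul_diag_next2:
  assumes "X \<in> UT" "diags_vanish X a" "Y \<in> UT" "diags_vanish Y b" "1 \<le> r"
  shows "bmul X Y r (r + (a + b + 3))
    = X r (r + (a + b + 3)) + Y r (r + (a + b + 3))
      + X r (r + (a + 1)) ** Y (r + (a + 1)) (r + (a + b + 3))
      + X r (r + (a + 2)) ** Y (r + (a + 2)) (r + (a + b + 3))"
proof -
  have "{a<..<a + b + 3 - b} = {a + 1, a + 2}"
    by auto
  then show ?thesis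
    using bmul_diag_vanishing[OF assms, of "a + b + 3"] by (simp add: add.assoc)
qed

lemma bpow_diags:
  assumes W: "W \<in> UT" "diags_vanish W l"
  shows "diags_vanish (bpow W q) l
    \<and> (\<forall>r\<ge>1. bpow W q r (r + (l + 1)) = (if odd q then W r (r + (l + 1)) else 0))"
proof (induction q)
  case 0
  then show ?case
    by (simp add: diags_vanish_def bone_def)
next
  case (Suc q)
  then have IH: "diags_vanish (bpow W q) l"
    "\<And>r. 1 \<le> r \<Longrightarrow> bpow W q r (r + (l + 1)) = (if odd q then W r (r + (l + 1)) else 0)"
    by auto
  have sum: "bmul W (bpow W q) r (r + j) = W r (r + j) + bpow W q r (r + j)"
    if "1 \<le> r" "1 \<le> j" "j \<le> l + 1" for r j
    using bmul_diag_low[of W l "bpow W q" 0 r j] W bpow_UT[OF W(1)] that by simp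
  have "diags_vanish (bmul W (bpow W q)) l"
    using sum diags_vanishD[OF W(2)] diags_vanishD[OF IH(1)] by (simp add: diags_vanish_def)
  moreover have "\<forall>r\<ge>1. bmul W (bpow W q) r (r + (l + 1))
      = (if odd (Suc q) then W r (r + (l + 1)) else 0)"
    using sum[of _ "l + 1"] IH(2) by simp
  ultimately show ?case
    by simp
qed

lemma bmul_self_diags:
  assumes Z: "Z \<in> UT" "diags_vanish Z l"
  shows "diags_vanish (bmul Z Z) (2 * l + 1)"
    and "1 \<le> r \<Longrightarrow> bmul Z Z r (r + (2 * l + 2)) = Z r (r + (l + 1)) ** Z (r + (l + 1)) (r + (2 * l + 2))"
    and "1 \<le> r \<Longrightarrow> bmul Z Z r (r + (2 * l + 3))
      = Z r (r + (l + 1)) ** Z (r + (l + 1)) (r + (2 * l + 3))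
        + Z r (r + (l + 2)) ** Z (r + (l + 2)) (r + (2 * l + 3))"
proof -
  show "diags_vanish (bmul Z Z) (2 * l + 1)"
    unfolding diags_vanish_def
  proof (intro ballI allI impI)
    fix j r :: nat assume "j \<in> {1..2 * l + 1}" "1 \<le> r"
    then show "bmul Z Z r (r + j) = 0"
      using bmul_diag_low[OF Z Z, of r j] by simp
  qed
  show "1 \<le> r \<Longrightarrow> bmul Z Z r (r + (2 * l + 2)) = Z r (r + (l + 1)) ** Z (r + (l + 1)) (r + (2 * l + 2))"
    using bmul_diag_next[OF Z Z, of r] by (simp only: mult_2 m3_add_self add_0_left)
  show "1 \<le> r \<Longrightarrow> bmul Z Z r (r + (2 * l + 3))
      = Z r (r + (l + 1)) ** Z (r + (l + 1)) (r + (2 * l + 3))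
        + Z r (r + (l + 2)) ** Z (r + (l + 2)) (r + (2 * l + 3))"
    using bmul_diag_next2[OF Z Z, of r] by (simp only: mult_2 m3_add_self add_0_left)
qed

lemma bpow_odd_diag:
  assumes P: "P \<in> UT" "diags_vanish P l"
    and "odd m" "1 \<le> r" "1 \<le> j" "j \<le> 2 * l + 1"
  shows "bpow P m r (r + j) = P r (r + j)"
proof -
  define W where "W = bpow (bmul P P) (m div 2)"
  have W: "W \<in> UT" "diags_vanish W (2 * l + 1)"
    unfolding W_def using bpow_UT bpow_diags bmul_UT bmul_self_diags(1) P by blast+
  have "bpow P m r (r + j) = P r (r + j) + W r (r + j)"
    unfolding bpow_odd[OF P(1) \<open>odd m\<close>, folded W_def]
    using bmul_diag_low[OF P(1) diags_vanish_0 W] assms(4-6) by simp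
  then show ?thesis
    using diags_vanishD[OF W(2)] assms(4-6) by simp
qed

lemma conj_diag_eq:
  assumes UT: "Q \<in> UT" "U \<in> UT" "X \<in> UT" and "bmul Q U = bmul U X"
    and "diags_vanish Q a" "diags_vanish X a" "1 \<le> r"
  shows "Q r (r + (a + 1)) = X r (r + (a + 1))"
proof -
  have "Q r (r + (a + 1)) + U r (r + (a + 1)) = bmul Q U r (r + (a + 1))"
    using bmul_diag_low[of Q a U 0 r "a + 1"] assms by simp
  also have "\<dots> = U r (r + (a + 1)) + X r (r + (a + 1))"
    using bmul_diag_low[of U 0 X a r "a + 1"] assms by simp
  finally show ?thesis
    by (simp add: add.commute)
qed

lemma conj_diags_vanish:
  assumes "Q \<in> UT" "U \<in> UT" "X \<in> UT" "bmul Q U = bmul U X" "diags_vanish X l"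
  shows "diags_vanish Q l"
  using \<open>diags_vanish X l\<close>
proof (induction l)
  case (Suc l)
  then show ?case
    using conj_diag_eq[OF assms(1-4), of l] by (simp add: diags_vanish_Suc)
qed simp

lemma conj_diag_next:
  assumes UT: "Q \<in> UT" "U \<in> UT" "X \<in> UT" and conj: "bmul Q U = bmul U X"
    and X: "diags_vanish X l" and "1 \<le> r"
  shows "Q r (r + (l + 2)) = X r (r + (l + 2)) + U r (r + 1) ** X (r + 1) (r + (l + 2))
    + X r (r + (l + 1)) ** U (r + (l + 1)) (r + (l + 2))"
proof -
  have Q: "diags_vanish Q l"
    using conj_diags_vanish[OF UT conj X] .
  have "Q r (r + (l + 2)) + U r (r + (l + 2)) + Q r (r + (l + 1)) ** U (r + (l + 1)) (r + (l + 2))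
      = bmul Q U r (r + (l + 2))"
    using bmul_diag_next[OF UT(1) Q UT(2) diags_vanish_0 \<open>1 \<le> r\<close>] by simp
  also have "\<dots> = U r (r + (l + 2)) + X r (r + (l + 2)) + U r (r + 1) ** X (r + 1) (r + (l + 2))"
    using bmul_diag_next[OF UT(2) diags_vanish_0 UT(3) X \<open>1 \<le> r\<close>] conj by simp
  finally show ?thesis
    using conj_diag_eq[OF UT conj Q X \<open>1 \<le> r\<close>] by (simp add: m3_add_eq_iff add.assoc)
qed

lemma isM_pair:
  "isM X l [c, d] \<longleftrightarrow> X \<in> G \<and> diags_vanish X l \<and> has_diag X (l + 1) c \<and> has_diag X (l + 2) d"
  by (auto simp: isM_def diags_vanish_def less_Suc_eq numeral_2_eq_2)

lemma has_diagD: "has_diag X j c \<Longrightarrow> 1 \<le> r \<Longrightarrow> X r (r + j) = dblock c (pidx r)"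
  by (simp add: has_diag_def)

lemma isM_bpow_odd:
  assumes P: "isM P l [c, d]" and "1 \<le> l" "odd m"
  shows "isM (bpow P m) l [c, d]"
proof -
  have "P \<in> UT" "diags_vanish P l"
    using P by (simp_all add: isM_pair G_UT)
  then have eq: "bpow P m r (r + j) = P r (r + j)" if "1 \<le> r" "1 \<le> j" "j \<le> l + 2" for r j
    using bpow_odd_diag \<open>odd m\<close> \<open>1 \<le> l\<close> that by simp
  have "diags_vanish (bpow P m) l"
    using eq \<open>diags_vanish P l\<close> by (simp add: diags_vanish_def)
  moreover have "\<forall>r\<ge>1. bpow P m r (r + (l + 1)) = P r (r + (l + 1))"
    "\<forall>r\<ge>1. bpow P m r (r + (l + 2)) = P r (r + (l + 2))"
    by (intro allI impI eq; simp)+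
  ultimately show ?thesis
    using P bpow_G by (simp add: isM_pair has_diag_def)
qed

lemma isM_square:
  assumes Z: "isM Z l [c, d]"
    and first: "\<And>r. 1 \<le> r \<Longrightarrow> dblock c (pidx r) ** dblock c (pidx (r + (l + 1))) = dblock c' (pidx r)"
    and second: "\<And>r. 1 \<le> r \<Longrightarrow> dblock c (pidx r) ** dblock d (pidx (r + (l + 1)))
      + dblock d (pidx r) ** dblock c (pidx (r + (l + 2))) = dblock d' (pidx r)"
  shows "isM (bmul Z Z) (2 * l + 1) [c', d']"
proof -
  have U: "Z \<in> UT" "diags_vanish Z l" and G: "Z \<in> G"
    and d1: "has_diag Z (l + 1) c" and d2: "has_diag Z (l + 2) d"
    using Z by (simp_all add: isM_pair G_UT)
  have "has_diag (bmul Z Z) (2 * l + 2) c'"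
    unfolding has_diag_def
  proof (intro allI impI)
    fix r :: nat assume r: "1 \<le> r"
    have idx: "r + (l + 1) + (l + 1) = r + (2 * l + 2)"
      by simp
    have "bmul Z Z r (r + (2 * l + 2)) = Z r (r + (l + 1)) ** Z (r + (l + 1)) (r + (2 * l + 2))"
      by (rule bmul_self_diags(2)[OF U r])
    also have "\<dots> = dblock c (pidx r) ** dblock c (pidx (r + (l + 1)))"
      using has_diagD[OF d1 r] has_diagD[OF d1, of "r + (l + 1)", unfolded idx] r by simp
    finally show "bmul Z Z r (r + (2 * l + 2)) = dblock c' (pidx r)"
      using first[OF r] by simp
  qed
  moreover have "has_diag (bmul Z Z) (2 * l + 3) d'"
    unfolding has_diag_def
  proof (intro allI impI)
    fix r :: nat assume r: "1 \<le> r"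
    have idx: "r + (l + 1) + (l + 2) = r + (2 * l + 3)" "r + (l + 2) + (l + 1) = r + (2 * l + 3)"
      by simp_all
    have "bmul Z Z r (r + (2 * l + 3))
        = Z r (r + (l + 1)) ** Z (r + (l + 1)) (r + (2 * l + 3))
          + Z r (r + (l + 2)) ** Z (r + (l + 2)) (r + (2 * l + 3))"
      by (rule bmul_self_diags(3)[OF U r])
    also have "\<dots> = dblock c (pidx r) ** dblock d (pidx (r + (l + 1)))
        + dblock d (pidx r) ** dblock c (pidx (r + (l + 2)))"
      using has_diagD[OF d1 r] has_diagD[OF d2 r] r
        has_diagD[OF d2, of "r + (l + 1)", unfolded idx(1)]
        has_diagD[OF d1, of "r + (l + 2)", unfolded idx(2)]
      by simp
    finally show "bmul Z Z r (r + (2 * l + 3)) = dblock d' (pidx r)"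
      using second[OF r] by simp
  qed
  ultimately show ?thesis
    using bmul_self_diags(1)[OF U] bmul_G[OF G G]
    by (simp add: isM_pair numeral_3_eq_3 numeral_2_eq_2)
qed

lemma isM_conj:
  assumes X: "isM X l [c, d]" and "Q \<in> G" "U \<in> UT" and u: "has_diag U 1 u"
    and conj: "bmul Q U = bmul U X"
    and second: "\<And>r. 1 \<le> r \<Longrightarrow> dblock e (pidx r) = dblock d (pidx r)
      + dblock u (pidx r) ** dblock c (pidx (r + 1)) + dblock c (pidx r) ** dblock u (pidx (r + (l + 1)))"
  shows "isM Q l [c, e]"
proof -
  have UT: "Q \<in> UT" "U \<in> UT" "X \<in> UT" and XV: "diags_vanish X l"
    and d1: "has_diag X (l + 1) c" and d2: "has_diag X (l + 2) d"
    using X assms(2,3) by (simp_all add: isM_pair G_UT)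
  have "has_diag Q (l + 2) e"
    unfolding has_diag_def
  proof (intro allI impI)
    fix r :: nat assume r: "1 \<le> r"
    have idx: "r + 1 + (l + 1) = r + (l + 2)" "r + (l + 1) + 1 = r + (l + 2)"
      by simp_all
    have "Q r (r + (l + 2)) = X r (r + (l + 2)) + U r (r + 1) ** X (r + 1) (r + (l + 2))
        + X r (r + (l + 1)) ** U (r + (l + 1)) (r + (l + 2))"
      by (rule conj_diag_next[OF UT conj XV r])
    also have "\<dots> = dblock d (pidx r) + dblock u (pidx r) ** dblock c (pidx (r + 1))
        + dblock c (pidx r) ** dblock u (pidx (r + (l + 1)))"
      using has_diagD[OF d2 r] has_diagD[OF u r] has_diagD[OF d1 r] r
        has_diagD[OF d1, of "r + 1", unfolded idx(1)]
        has_diagD[OF u, of "r + (l + 1)", unfolded idx(2)]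
      by simp
    finally show "Q r (r + (l + 2)) = dblock e (pidx r)"
      using second[OF r] by simp
  qed
  moreover have "has_diag Q (l + 1) c"
    using conj_diag_eq[OF UT conj conj_diags_vanish[OF UT conj XV] XV] d1
    by (simp add: has_diag_def)
  ultimately show ?thesis
    using conj_diags_vanish[OF UT conj XV] \<open>Q \<in> G\<close> by (simp add: isM_pair)
qed

section \<open>Block indices modulo 3 and identities between diagonals\<close>

lemma pidx_add_mod3:
  assumes "1 \<le> r"
  shows "pidx (r + s) = pidx (r + s mod 3)"
proof -
  have "r + s - 1 = (r - 1) + s" "r + s mod 3 - 1 = (r - 1) + s mod 3"
    using assms by auto
  then show ?thesis
    by (simp add: pidx_def mod_add_right_eq)
qed

lemma pidx_Suc: "1 \<le> r \<Longrightarrow> pidx (Suc r) = (if pidx r = 3 then 1 else Suc (pidx r))"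
  by (cases r) (simp_all add: pidx_def mod_Suc)

lemma pidx_cycle:
  assumes "1 \<le> r"
  shows "(pidx r, pidx (r + 1), pidx (r + 2)) \<in> {(1, 2, 3), (2, 3, 1), (3, 1, 2)}"
proof -
  have "pidx r \<in> {1, 2, 3}"
    unfolding pidx_def by auto
  then show ?thesis
    using pidx_Suc[OF assms] pidx_Suc[of "Suc r"] assms by (auto simp: numeral_2_eq_2)
qed

lemma pow2_mod3: "(2::nat) ^ k mod 3 = (if odd k then 2 else 1)"
proof (induction k)
  case (Suc k)
  have "(2::nat) ^ Suc k mod 3 = 2 * (2 ^ k mod 3) mod 3"
    by (simp add: mod_mult_right_eq)
  with Suc.IH show ?case
    by simp
qed simp

lemma pidx_add_pow2: "1 \<le> r \<Longrightarrow> pidx (r + 2 ^ k) = pidx (r + (if odd k then 2 else 1))"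
  by (simp add: pidx_add_mod3[of r "2 ^ k"] pow2_mod3)

lemma bitc_bit: "bitc c k = (if bit c k then 1 else 0)"
  by (simp add: bitc_def bit_iff_odd)

lemmas dblock_eval = bit_0 dblock_def dec_def bitc_bit vec_eq_iff forall_3 matrix_matrix_mult_def sum_3

lemma dblock_zero [simp]: "dblock (0, 0, 0) i = 0"
  by (simp add: dblock_eval)

lemma x1_square_diag2:
  "1 \<le> r \<Longrightarrow> dblock (23,224,138) (pidx r) ** dblock (23,224,138) (pidx (r + 1))
    = dblock (39,208,186) (pidx r)"
  by (drule pidx_cycle) (elim insertE emptyE; simp add: dblock_eval)

lemma x1_square_diag3:
  "1 \<le> r \<Longrightarrow> dblock (23,224,138) (pidx r) ** dblock (59,136,495) (pidx (r + 1))
    + dblock (59,136,495) (pidx r) ** dblock (23,224,138) (pidx (r + 2)) = 0"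
  by (drule pidx_cycle) (elim insertE emptyE; simp add: dblock_eval)

lemma x1_pow2_odd_square:
  "1 \<le> r \<Longrightarrow> dblock (39,208,186) (pidx r) ** dblock (39,208,186) (pidx (r + 2))
    = dblock (23,224,138) (pidx r)"
  by (drule pidx_cycle) (elim insertE emptyE; simp add: dblock_eval)

lemma x1_odd_diag2: "dblock (59,136,495) i + dblock (39,208,186) i = dblock (28,88,341) i"
  by (simp add: dblock_eval)

lemma y1_diag2_59:
  "1 \<le> r \<Longrightarrow> dblock (33,146,501) (pidx r) = dblock (59,136,495) (pidx r)
    + dblock (46,68,217) (pidx r) ** dblock (23,224,138) (pidx (r + 1))
    + dblock (23,224,138) (pidx r) ** dblock (46,68,217) (pidx (r + 1))"
  by (drule pidx_cycle) (elim insertE emptyE; simp add: dblock_eval)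

lemma y1_diag2_28:
  "1 \<le> r \<Longrightarrow> dblock (6,66,335) (pidx r) = dblock (28,88,341) (pidx r)
    + dblock (46,68,217) (pidx r) ** dblock (23,224,138) (pidx (r + 1))
    + dblock (23,224,138) (pidx r) ** dblock (46,68,217) (pidx (r + 1))"
  by (drule pidx_cycle) (elim insertE emptyE; simp add: dblock_eval)

lemma y1_diag2_odd:
  "1 \<le> r \<Longrightarrow> dblock (0,106,247) (pidx r) = dblock (0,0,0) (pidx r)
    + dblock (46,68,217) (pidx r) ** dblock (39,208,186) (pidx (r + 1))
    + dblock (39,208,186) (pidx r) ** dblock (46,68,217) (pidx (r + 2))"
  by (drule pidx_cycle) (elim insertE emptyE; simp add: dblock_eval)

lemma y1_diag2_even:
  "1 \<le> r \<Longrightarrow> dblock (26,26,26) (pidx r) = dblock (0,0,0) (pidx r)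
    + dblock (46,68,217) (pidx r) ** dblock (23,224,138) (pidx (r + 1))
    + dblock (23,224,138) (pidx r) ** dblock (46,68,217) (pidx (r + 1))"
  by (drule pidx_cycle) (elim insertE emptyE; simp add: dblock_eval)

section \<open>Powers of x1 and y1\<close>

lemma Mfin_G: "Mfin cs \<in> G"
proof -
  have "pidx (r + 3) = pidx r" if "1 \<le> r" for r
    using pidx_add_mod3[OF that, of 3] by simp
  then show ?thesis
    by (auto simp: G_def UT_def Mfin_def)
qed

lemma has_diag_Mfin_Cons: "has_diag (Mfin (c # cs)) 1 c"
  by (simp add: has_diag_def Mfin_def)

lemma isM_Mfin: "isM (Mfin (c # d # cs)) 0 [c, d]"
  by (simp add: isM_pair Mfin_G has_diag_def Mfin_def)

lemma isM_x1: "isM x1 0 [(23,224,138), (59,136,495)]"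
  by (simp add: x1_def isM_Mfin)

lemma x1_G: "x1 \<in> G"
  by (simp add: x1_def Mfin_G)

lemma x1_UT: "x1 \<in> UT"
  by (simp add: x1_G G_UT)

lemma x2_G: "x2 \<in> G"
  by (simp add: x2_def Mfin_G)

lemma x2_diag1: "has_diag x2 1 (46,68,217)"
  unfolding x2_def by (rule has_diag_Mfin_Cons)

lemma isM_x1_pow2:
  "1 \<le> k \<Longrightarrow> isM (bpow x1 (2 ^ k)) (2 ^ k - 1)
     [if odd k then (39,208,186) else (23,224,138), (0,0,0)]"
proof (induction k rule: nat_induct_at_least)
  case base
  have "isM (bmul x1 x1) (2 * 0 + 1) [(39,208,186), (0,0,0)]"
    by (rule isM_square[OF isM_x1]) (use x1_square_diag2 x1_square_diag3 in simp_all)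
  then show ?case
    by (simp add: bpow_two[OF x1_UT])
next
  case (Suc k)
  define l where "l = (2::nat) ^ k - 1"
  have "1 \<le> (2::nat) ^ k"
    by simp
  then have l: "l + 1 = 2 ^ k" "2 * l + 1 = 2 ^ Suc k - 1"
    unfolding l_def power_Suc by linarith+
  have "isM (bmul (bpow x1 (2 ^ k)) (bpow x1 (2 ^ k))) (2 * l + 1)
      [if odd (Suc k) then (39,208,186) else (23,224,138), (0,0,0)]"
  proof (rule isM_square)
    show "isM (bpow x1 (2 ^ k)) l [if odd k then (39,208,186) else (23,224,138), (0,0,0)]"
      using Suc.IH by (simp add: l_def)
    show "dblock (if odd k then (39,208,186) else (23,224,138)) (pidx r)
        ** dblock (if odd k then (39,208,186) else (23,224,138)) (pidx (r + (l + 1)))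
        = dblock (if odd (Suc k) then (39,208,186) else (23,224,138)) (pidx r)" if "1 \<le> r" for r
      unfolding l(1) pidx_add_pow2[OF that]
      using that x1_pow2_odd_square x1_square_diag2 by (cases "odd k") simp_all
  qed simp
  moreover have "bpow x1 (2 ^ Suc k) = bmul (bpow x1 (2 ^ k)) (bpow x1 (2 ^ k))"
    using bpow_mult[OF x1_UT, of "2 ^ k" 2] by (simp add: bpow_two bpow_UT[OF x1_UT] mult.commute)
  ultimately show ?case
    by (simp only: l(2))
qed

lemma isM_x1_odd:
  assumes "odd m"
  shows "isM (bpow x1 m) 0 [(23,224,138), if odd (m div 2) then (28,88,341) else (59,136,495)]"
proof -
  define W where "W = bpow (bmul x1 x1) (m div 2)"
  have "isM (bmul x1 x1) 1 [(39,208,186), (0,0,0)]"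
    using isM_x1_pow2[of 1] by (simp add: bpow_two[OF x1_UT])
  then have "bmul x1 x1 \<in> UT" "diags_vanish (bmul x1 x1) 1" "has_diag (bmul x1 x1) 2 (39,208,186)"
    by (simp_all add: isM_pair G_UT numeral_2_eq_2)
  then have W: "W \<in> UT" "diags_vanish W 1"
    and W2: "\<And>r. 1 \<le> r \<Longrightarrow> W r (r + 2) = (if odd (m div 2) then dblock (39,208,186) (pidx r) else 0)"
    unfolding W_def using bpow_UT bpow_diags[of "bmul x1 x1" 1 "m div 2"]
    by (auto simp: has_diag_def)
  have sum: "bpow x1 m r (r + j) = x1 r (r + j) + W r (r + j)" if "1 \<le> r" "1 \<le> j" "j \<le> 2" for r j
    unfolding bpow_odd[OF x1_UT assms, folded W_def]
    using bmul_diag_low[OF x1_UT diags_vanish_0 W that(1,2)] that(3) by simp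
  have "has_diag x1 1 (23,224,138)" "has_diag x1 2 (59,136,495)"
    using isM_x1 by (simp_all add: isM_pair numeral_2_eq_2)
  then show ?thesis
    using sum[of _ 1] sum[of _ 2] diags_vanishD[OF W(2), of 1] W2 bpow_G[OF x1_G]
    by (auto simp: isM_pair has_diag_def x1_odd_diag2)
qed

lemma pow2_times_odd: "1 \<le> (n::nat) \<Longrightarrow> \<exists>k m. n = 2 ^ k * m \<and> odd m"
proof (induction n rule: less_induct)
  case (less n)
  show ?case
  proof (cases "odd n")
    case True
    then show ?thesis
      by (intro exI[of _ 0] exI[of _ n]) simp
  next
    case False
    then obtain n' where n': "n = 2 * n'"
      by blast
    with less.prems have "n' < n" "1 \<le> n'"
      by auto
    then obtain k m where "n' = 2 ^ k * m" "odd m"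
      using less.IH by blast
    with n' show ?thesis
      by (intro exI[of _ "Suc k"] exI[of _ m]) simp
  qed
qed

lemma x1_pow_forms:
  assumes "1 \<le> n"
  shows "isM (bpow x1 n) 0 [(23,224,138),(59,136,495)]
    \<or> isM (bpow x1 n) 0 [(23,224,138),(28,88,341)]
    \<or> (\<exists>r::nat. odd r \<and> r \<ge> 1 \<and> isM (bpow x1 n) (2 ^ r - 1) [(39,208,186),(0,0,0)])
    \<or> (\<exists>r::nat. even r \<and> r \<ge> 2 \<and> isM (bpow x1 n) (2 ^ r - 1) [(23,224,138),(0,0,0)])"
proof -
  obtain k m where n: "n = 2 ^ k * m" "odd m"
    using pow2_times_odd[OF assms] by blast
  show ?thesis
  proof (cases "k = 0")
    case True
    then show ?thesis
      using isM_x1_odd[OF n(2)] n(1) by (cases "odd (m div 2)") auto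
  next
    case False
    have "(2::nat) ^ 1 \<le> 2 ^ k"
      using False by (intro power_increasing) auto
    then have "isM (bpow (bpow x1 (2 ^ k)) m) (2 ^ k - 1)
        [if odd k then (39,208,186) else (23,224,138), (0,0,0)]"
      using False by (intro isM_bpow_odd isM_x1_pow2 n(2)) auto
    then have form: "isM (bpow x1 n) (2 ^ k - 1) [if odd k then (39,208,186) else (23,224,138), (0,0,0)]"
      by (simp add: n(1) bpow_mult[OF x1_UT])
    show ?thesis
    proof (cases "odd k")
      case True
      with form False show ?thesis
        by auto
    next
      case False
      with \<open>k \<noteq> 0\<close> have "2 \<le> k"
        by presburger
      with form False show ?thesis
        by auto
    qed
  qed
qed

lemma y1_G: "y1 \<in> G"
  by (simp add: y1_def bmul_G x1_G x2_G binv_G)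

lemma y1_x2: "bmul y1 x2 = bmul x2 x1"
proof -
  have "bmul y1 x2 = bmul (bmul x2 x1) (bmul (binv x2) x2)"
    by (simp add: y1_def bmul_assoc)
  also have "\<dots> = bmul x2 x1"
    using x2_G x1_G by (simp add: bmul_binv_left G_UT bmul_bone_right bmul_UT)
  finally show ?thesis .
qed

lemma y1_pow_forms:
  assumes "1 \<le> n"
  shows "isM (bpow y1 n) 0 [(23,224,138),(33,146,501)]
    \<or> isM (bpow y1 n) 0 [(23,224,138),(6,66,335)]
    \<or> (\<exists>r::nat. odd r \<and> r \<ge> 1 \<and> isM (bpow y1 n) (2 ^ r - 1) [(39,208,186),(0,106,247)])
    \<or> (\<exists>r::nat. even r \<and> r \<ge> 2 \<and> isM (bpow y1 n) (2 ^ r - 1) [(23,224,138),(26,26,26)])"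
proof -
  note conj_form = isM_conj[OF _ bpow_G[OF y1_G] G_UT[OF x2_G] x2_diag1
      bpow_intertwine[OF G_UT[OF x2_G] y1_x2]]
  have pow: "(2::nat) ^ k - 1 + 1 = 2 ^ k" for k
    by simp
  from x1_pow_forms[OF assms] show ?thesis
  proof (elim disjE exE conjE)
    assume "isM (bpow x1 n) 0 [(23,224,138),(59,136,495)]"
    then have "isM (bpow y1 n) 0 [(23,224,138),(33,146,501)]"
      by (rule conj_form) (use y1_diag2_59 in simp)
    then show ?thesis
      by blast
  next
    assume "isM (bpow x1 n) 0 [(23,224,138),(28,88,341)]"
    then have "isM (bpow y1 n) 0 [(23,224,138),(6,66,335)]"
      by (rule conj_form) (use y1_diag2_28 in simp)
    then show ?thesis
      by blast
  next
    fix k assume k: "odd k" "1 \<le> k" and X: "isM (bpow x1 n) (2 ^ k - 1) [(39,208,186),(0,0,0)]"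
    have "isM (bpow y1 n) (2 ^ k - 1) [(39,208,186),(0,106,247)]"
      by (rule conj_form[OF X]) (use y1_diag2_odd pidx_add_pow2 k in \<open>simp add: pow\<close>)
    with k show ?thesis
      by blast
  next
    fix k assume k: "even k" "2 \<le> k" and X: "isM (bpow x1 n) (2 ^ k - 1) [(23,224,138),(0,0,0)]"
    have "isM (bpow y1 n) (2 ^ k - 1) [(23,224,138),(26,26,26)]"
      by (rule conj_form[OF X]) (use y1_diag2_even pidx_add_pow2 k in \<open>simp add: pow\<close>)
    with k show ?thesis
      by blast
  qed
qed

theorem proposition4p6:
  shows "(\<forall>n::nat. n \<ge> 1 \<longrightarrow>
            isM (bpow x1 n) 0 [(23,224,138),(59,136,495)]
          \<or> isM (bpow x1 n) 0 [(23,224,138),(28,88,341)]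
          \<or> (\<exists>r::nat. odd r \<and> r \<ge> 1 \<and> isM (bpow x1 n) (2 ^ r - 1) [(39,208,186),(0,0,0)])
          \<or> (\<exists>r::nat. even r \<and> r \<ge> 2 \<and> isM (bpow x1 n) (2 ^ r - 1) [(23,224,138),(0,0,0)]))
       \<and> (\<forall>n::nat. n \<ge> 1 \<longrightarrow>
            isM (bpow y1 n) 0 [(23,224,138),(33,146,501)]
          \<or> isM (bpow y1 n) 0 [(23,224,138),(6,66,335)]
          \<or> (\<exists>r::nat. odd r \<and> r \<ge> 1 \<and> isM (bpow y1 n) (2 ^ r - 1) [(39,208,186),(0,106,247)])
          \<or> (\<exists>r::nat. even r \<and> r \<ge> 2 \<and> isM (bpow y1 n) (2 ^ r - 1) [(23,224,138),(26,26,26)]))"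
  using x1_pow_forms y1_pow_forms by blast

end
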